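(* Let $n$ and $0<n_1<\cdots<n_d<n$ be integers with $m_1=n_1$, $m_k=n_k-n_{k-1}$ ($2\le k\le d$), $m_{d+1}=n-n_d$, and regard $\mathrm{Flag}(n_1,\dots,n_d;n)=\{(VJ_1V^{\mathsf T},\dots,VJ_dV^{\mathsf T}):V\in\mathrm{O}(n)\}$ as a submanifold of $(\mathbb{R}^{n\times n})^d$ with the Frobenius inner product. Let $V(t)$ be a differentiable curve in $\mathrm{O}(n)$, $\Lambda(t)=V(t)^{\mathsf T}\dot V(t)\in\mathfrak{so}(n)$, with $\Lambda(p,p)(t)\equiv0$ for $p=1,\dots,d+1$, let $c(t)=V(t)(J_1,\dots,J_d)V(t)^{\mathsf T}$ and \[ T_3(t)=V(t)\big(\Lambda(t)J_1\Lambda(t),\dots,\Lambda(t)J_d\Lambda(t)\big)V(t)^{\mathsf T}. \] Then the orthogonal projection of $T_3(t)$ onto $\mathbb{T}_{c(t)}\mathrm{Flag}(n_1,\dots,n_d;n)$ equals $V(t)(X_1,\dots,X_d)V(t)^{\mathsf T}$, where each $X_k$ is a symmetric matrix whose $(p,q)$ block vanishes for every $(p,q)$ other than $(k,d+1)$ and $(d+1,k)$. Moreover, writing $\Lambda(t)=\begin{bmatrix}\Lambda_0(t)&\Lambda_1(t)\\-\Lambda_1(t)^{\mathsf T}&0\end{bmatrix}$ with $\Lambda_0(t)\in\mathfrak{so}(n-m_{d+1})$ and $\Lambda_1(t)\in\mathbb{R}^{(n-m_{d+1})\times m_{d+1}}$, one has \[ \begin{bmatrix}X_1(1,d+1)\\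 \vdots\\ X_d(d,d+1)\end{bmatrix}=-\Lambda_0(t)\Lambda_1(t). \]
   Context: $J_k=\operatorname{diag}(-I_{m_1},\dots,-I_{m_{k-1}},I_{m_k},-I_{m_{k+1}},\dots,-I_{m_{d+1}})$. $V(X_1,\dots,X_d)V^{\mathsf T}$ denotes $(VX_1V^{\mathsf T},\dots,VX_dV^{\mathsf T})$. For an $n\times n$ matrix $M$, $M(p,q)$ denotes its $(p,q)$ block in the partition $n=m_1+\cdots+m_{d+1}$. *)

theory Defs
  imports Complex_Main
begin

text \<open>Matrices of size n x n are represented as functions nat => nat => real,
  only entries with indices below n being meaningful; products are
  restricted so that results vanish outside the n x n range.
  Tuples in (R^{n x n})^d are functions nat => mat indexed by k in {1..d}.\<close>

type_synonym mat = "nat \<Rightarrow> nat \<Rightarrow> real"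
type_synonym mtuple = "nat \<Rightarrow> mat"

definition in_mat :: "nat \<Rightarrow> mat \<Rightarrow> bool" where
  "in_mat n A \<longleftrightarrow> (\<forall>i j. (n \<le> i \<or> n \<le> j) \<longrightarrow> A i j = 0)"

definition mmul :: "nat \<Rightarrow> mat \<Rightarrow> mat \<Rightarrow> mat" where
  "mmul n A B = (\<lambda>i j. if i < n \<and> j < n then (\<Sum>l<n. A i l * B l j) else 0)"

definition mtr :: "mat \<Rightarrow> mat" where
  "mtr A = (\<lambda>i j. A j i)"

definition idm :: "nat \<Rightarrow> mat" where
  "idm n = (\<lambda>i j. if i < n \<and> j < n \<and> i = j then 1 else 0)"

definition orth :: "nat \<Rightarrow> mat set" where
  "orth n = {V. in_mat n V \<and> mmul n (mtr V) V = idm n}"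

text \<open>Block boundaries: n_0 = 0, n_k for 1<=k<=d, n_{d+1} = n.
  Block p (1<=p<=d+1) consists of the indices n_{p-1} .. n_p - 1.\<close>
definition bd :: "nat \<Rightarrow> (nat \<Rightarrow> nat) \<Rightarrow> nat \<Rightarrow> nat \<Rightarrow> nat" where
  "bd n ns d k = (if k = 0 then 0 else if k \<le> d then ns k else n)"

definition blk :: "nat \<Rightarrow> (nat \<Rightarrow> nat) \<Rightarrow> nat \<Rightarrow> nat \<Rightarrow> nat set" where
  "blk n ns d p = {bd n ns d (p - 1) ..< bd n ns d p}"

definition Jm :: "nat \<Rightarrow> (nat \<Rightarrow> nat) \<Rightarrow> nat \<Rightarrow> nat \<Rightarrow> mat" where
  "Jm n ns d k = (\<lambda>i j. if i < n \<and> j < n \<and> i = j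
      then (if i \<in> blk n ns d k then 1 else -1) else 0)"

definition conjm :: "nat \<Rightarrow> mat \<Rightarrow> mat \<Rightarrow> mat" where
  "conjm n V A = mmul n (mmul n V A) (mtr V)"

definition conjt :: "nat \<Rightarrow> nat \<Rightarrow> mat \<Rightarrow> mtuple \<Rightarrow> mtuple" where
  "conjt n d V X = (\<lambda>k. if 1 \<le> k \<and> k \<le> d then conjm n V (X k) else (\<lambda>i j. 0))"

definition flag :: "nat \<Rightarrow> (nat \<Rightarrow> nat) \<Rightarrow> nat \<Rightarrow> mtuple set" where
  "flag n ns d = {conjt n d V (Jm n ns d) | V. V \<in> orth n}"

definition finner :: "nat \<Rightarrow> nat \<Rightarrow> mtuple \<Rightarrow> mtuple \<Rightarrow> real" where
  "finner n d X Y = (\<Sum>k\<in>{1..d}. \<Sum>i<n. \<Sum>j<n. X k i j * Y k i j)"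

definition tangent_space :: "mtuple set \<Rightarrow> mtuple \<Rightarrow> mtuple set" where
  "tangent_space M c = {D. \<exists>\<gamma> e. e > 0 \<and> (\<forall>s. \<bar>s\<bar> < e \<longrightarrow> \<gamma> s \<in> M) \<and> \<gamma> 0 = c \<and>
      (\<forall>k i j. ((\<lambda>s. \<gamma> s k i j) has_real_derivative D k i j) (at 0))}"

definition is_orth_proj :: "nat \<Rightarrow> nat \<Rightarrow> mtuple set \<Rightarrow> mtuple \<Rightarrow> mtuple \<Rightarrow> bool" where
  "is_orth_proj n d T x P \<longleftrightarrow> P \<in> T \<and> (\<forall>W\<in>T. finner n d (\<lambda>k i j. x k i j - P k i j) W = 0)"

end

(*
  For a tangent vector D of the flag at c = V (J_1, ..., J_d) V^T put E_k = V^T D_k V.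
  Differentiating the identities G_k^3 = G_k and G_k G_l = G_l G_k, which hold on the flag,
  gives E_k + J_k E_k J_k = 0 and E_k J_l + J_k E_l = E_l J_k + J_l E_k.  Blockwise: E_k(p,q)
  vanishes unless p <> q and k is p or q, and E_p(p,q) = - E_q(p,q) when p, q <= d.

  Conversely, for skew Omega the curve s -> V exp(s Omega) (J_1, ..., J_d) exp(-s Omega) V^T
  lies on the flag and has velocity V (Omega J_k - J_k Omega)_k V^T.  Taking for Omega the
  skew matrix whose upper right block is Lambda_0 Lambda_1 / 2 yields exactly the tuple X of
  the statement, so V X V^T is tangent.

  Since the Frobenius product is invariant under conjugation, orthogonality of the residual
  T_3 - V X V^T to D reduces to the vanishing, for each entry (a,b), of the sum over k of
  (Lambda J_k Lambda - X_k)(a,b) E_k(a,b).  As Lambda has zero diagonal blocks, the (a,b) entry of Lambda J_k Lambda is -(Lambda^2)(a,b)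
  whenever a lies in block p, b in block q and k is p or q; together with the block
  description of the E_k this makes every such sum vanish.
*)
theory Submission
  imports Defs
begin

section \<open>Matrix algebra\<close>

definition mtrunc :: "nat \<Rightarrow> mat \<Rightarrow> mat" where
  "mtrunc n A = (\<lambda>i j. if i < n \<and> j < n then A i j else 0)"

definition madd :: "mat \<Rightarrow> mat \<Rightarrow> mat" where
  "madd A B = (\<lambda>i j. A i j + B i j)"

definition skew_mat :: "nat \<Rightarrow> mat \<Rightarrow> bool" where
  "skew_mat n A \<longleftrightarrow> (\<forall>i j. i < n \<and> j < n \<longrightarrow> A j i = - A i j)"

lemma skew_mat_swap: "skew_mat n A \<Longrightarrow> i < n \<Longrightarrow> j < n \<Longrightarrow> A j i = - A i j"
  unfolding skew_mat_def by blast

lemma skew_mat_add: "skew_mat n A \<Longrightarrow> i < n \<Longrightarrow> j < n \<Longrightarrow> A i j + A j i = 0"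
  unfolding skew_mat_def by (metis neg_eq_iff_add_eq_0)

lemma mmul_assoc: "mmul n (mmul n A B) C = mmul n A (mmul n B C)"
proof (intro ext)
  fix i j
  show "mmul n (mmul n A B) C i j = mmul n A (mmul n B C) i j"
  proof (cases "i < n \<and> j < n")
    case True
    then have "mmul n (mmul n A B) C i j = (\<Sum>m<n. \<Sum>l<n. A i l * B l m * C m j)"
      by (simp add: mmul_def sum_distrib_right)
    also have "\<dots> = (\<Sum>l<n. \<Sum>m<n. A i l * B l m * C m j)"
      by (rule sum.swap)
    also have "\<dots> = mmul n A (mmul n B C) i j"
      using True by (simp add: mmul_def sum_distrib_left mult.assoc)
    finally show ?thesis .
  qed (auto simp: mmul_def)
qed

lemma mmul_mtrunc_left [simp]: "mmul n (mtrunc n A) B = mmul n A B"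
  and mmul_mtrunc_right [simp]: "mmul n A (mtrunc n B) = mmul n A B"
  by (auto simp: mmul_def mtrunc_def intro!: ext sum.cong)

lemma mtr_mtr [simp]: "mtr (mtr A) = A"
  by (simp add: mtr_def)

lemma mtr_idm [simp]: "mtr (idm n) = idm n"
  by (intro ext) (auto simp: mtr_def idm_def)

lemma mtrunc_idm [simp]: "mtrunc n (idm n) = idm n"
  by (intro ext) (simp add: mtrunc_def idm_def)

lemma mtr_mtrunc [simp]: "mtr (mtrunc n A) = mtrunc n (mtr A)"
  by (intro ext) (auto simp: mtr_def mtrunc_def)

lemma mtrunc_mmul [simp]: "mtrunc n (mmul n A B) = mmul n A B"
  by (intro ext) (simp add: mtrunc_def mmul_def)

lemma mtrunc_in_mat: "in_mat n A \<Longrightarrow> mtrunc n A = A"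
  by (intro ext) (auto simp: mtrunc_def in_mat_def)

lemma in_mat_eqI:
  "in_mat n A \<Longrightarrow> in_mat n B \<Longrightarrow> (\<And>i j. i < n \<Longrightarrow> j < n \<Longrightarrow> A i j = B i j) \<Longrightarrow> A = B"
  unfolding in_mat_def by (metis ext not_le)

lemma in_mat_idm: "in_mat n (idm n)"
  by (simp add: in_mat_def idm_def)

lemma in_mat_mmul: "in_mat n (mmul n A B)"
  by (simp add: in_mat_def mmul_def)

lemma mtr_mmul: "mtr (mmul n A B) = mmul n (mtr B) (mtr A)"
  by (intro ext) (simp add: mmul_def mtr_def mult.commute)

lemma mmul_idm_left [simp]: "mmul n (idm n) A = mtrunc n A"
  and mmul_idm_right [simp]: "mmul n A (idm n) = mtrunc n A"
  by (intro ext; simp add: mmul_def idm_def mtrunc_def if_distrib if_distribR sum.delta' cong: if_cong)+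

lemma mmul_madd_left: "mmul n (madd A B) C = madd (mmul n A C) (mmul n B C)"
  and mmul_madd_right: "mmul n C (madd A B) = madd (mmul n C A) (mmul n C B)"
  by (intro ext; simp add: mmul_def madd_def distrib_left distrib_right sum.distrib)+

lemma mmul_zero_left [simp]: "mmul n (\<lambda>i j. 0) A = (\<lambda>i j. 0)"
  and mmul_zero_right [simp]: "mmul n A (\<lambda>i j. 0) = (\<lambda>i j. 0)"
  by (intro ext, simp add: mmul_def)+

lemma madd_zero_left [simp]: "madd (\<lambda>i j. 0) A = A"
  and madd_zero_right [simp]: "madd A (\<lambda>i j. 0) = A"
  by (simp_all add: madd_def)

lemma mmul_cong:
  "(\<And>i j. i < n \<Longrightarrow> j < n \<Longrightarrow> A i j = A' i j) \<Longrightarrow>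
    (\<And>i j. i < n \<Longrightarrow> j < n \<Longrightarrow> B i j = B' i j) \<Longrightarrow> mmul n A B = mmul n A' B'"
  by (auto simp: mmul_def intro!: ext sum.cong)

lemma orth_mtr_mmul: "V \<in> orth n \<Longrightarrow> mmul n (mtr V) V = idm n"
  by (simp add: orth_def)

lemma orth_cancel: "V \<in> orth n \<Longrightarrow> mmul n (mtr V) (mmul n V X) = mtrunc n X"
  by (simp add: mmul_assoc[symmetric] orth_def)

lemma orth_mmul: "V \<in> orth n \<Longrightarrow> Q \<in> orth n \<Longrightarrow> mmul n V Q \<in> orth n"
  by (simp add: orth_def in_mat_mmul mtr_mmul mmul_assoc orth_cancel)

lemma conjm_mmul: "conjm n (mmul n V Q) A = conjm n V (conjm n Q A)"
  by (simp add: conjm_def mtr_mmul mmul_assoc)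

lemma conjm_mmul_conjm: "W \<in> orth n \<Longrightarrow> mmul n (conjm n W A) (conjm n W B) = conjm n W (mmul n A B)"
  by (simp add: conjm_def mmul_assoc orth_cancel)

definition unconjm :: "nat \<Rightarrow> mat \<Rightarrow> mat \<Rightarrow> mat" where
  "unconjm n V A = mmul n (mtr V) (mmul n A V)"

definition frob :: "nat \<Rightarrow> mat \<Rightarrow> mat \<Rightarrow> real" where
  "frob n A B = (\<Sum>i<n. \<Sum>j<n. A i j * B i j)"

lemma frob_mmul_left: "frob n (mmul n A B) C = frob n B (mmul n (mtr A) C)"
proof -
  have "frob n (mmul n A B) C = (\<Sum>i<n. \<Sum>j<n. \<Sum>l<n. A i l * B l j * C i j)"
    by (simp add: frob_def mmul_def sum_distrib_right)
  also have "\<dots> = (\<Sum>i<n. \<Sum>l<n. \<Sum>j<n. A i l * B l j * C i j)"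
    by (intro sum.cong refl sum.swap)
  also have "\<dots> = (\<Sum>l<n. \<Sum>i<n. \<Sum>j<n. A i l * B l j * C i j)"
    by (rule sum.swap)
  also have "\<dots> = (\<Sum>l<n. \<Sum>j<n. \<Sum>i<n. A i l * B l j * C i j)"
    by (intro sum.cong refl sum.swap)
  also have "\<dots> = frob n B (mmul n (mtr A) C)"
    by (simp add: frob_def mmul_def mtr_def sum_distrib_left mult_ac)
  finally show ?thesis .
qed

lemma frob_mmul_right: "frob n (mmul n A B) C = frob n A (mmul n C (mtr B))"
proof -
  have "frob n (mmul n A B) C = (\<Sum>i<n. \<Sum>j<n. \<Sum>l<n. A i l * B l j * C i j)"
    by (simp add: frob_def mmul_def sum_distrib_right)
  also have "\<dots> = (\<Sum>i<n. \<Sum>l<n. \<Sum>j<n. A i l * B l j * C i j)"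
    by (intro sum.cong refl sum.swap)
  also have "\<dots> = frob n A (mmul n C (mtr B))"
    by (simp add: frob_def mmul_def mtr_def sum_distrib_left mult_ac)
  finally show ?thesis .
qed

lemma frob_conjm: "frob n (conjm n V A) D = frob n A (unconjm n V D)"
proof -
  have "frob n (conjm n V A) D = frob n (mmul n V A) (mmul n D V)"
    using frob_mmul_right[of n "mmul n V A" "mtr V" D] by (simp add: conjm_def)
  then show ?thesis
    by (simp only: frob_mmul_left unconjm_def)
qed

section \<open>Derivatives of matrix curves\<close>

definition mat_has_deriv :: "nat \<Rightarrow> (real \<Rightarrow> mat) \<Rightarrow> mat \<Rightarrow> real \<Rightarrow> bool" where
  "mat_has_deriv n A A' x \<longleftrightarrow>
     (\<forall>i j. i < n \<and> j < n \<longrightarrow> ((\<lambda>s. A s i j) has_real_derivative A' i j) (at x))"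

lemma mat_has_deriv_const: "mat_has_deriv n (\<lambda>s. C) (\<lambda>i j. 0) x"
  by (simp add: mat_has_deriv_def)

lemma mat_has_deriv_mtr: "mat_has_deriv n A A' x \<Longrightarrow> mat_has_deriv n (\<lambda>s. mtr (A s)) (mtr A') x"
  by (simp add: mat_has_deriv_def mtr_def)

lemma mat_has_deriv_mmul:
  assumes "mat_has_deriv n A A' x" "mat_has_deriv n B B' x"
  shows "mat_has_deriv n (\<lambda>s. mmul n (A s) (B s)) (madd (mmul n A' (B x)) (mmul n (A x) B')) x"
  unfolding mat_has_deriv_def
proof (intro allI impI)
  fix i j assume ij: "i < n \<and> j < n"
  have "((\<lambda>s. \<Sum>l<n. A s i l * B s l j) has_real_derivative
          (\<Sum>l<n. A' i l * B x l j + B' l j * A x i l)) (at x)"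
    using assms ij unfolding mat_has_deriv_def by (intro DERIV_sum DERIV_mult) auto
  then show "((\<lambda>s. mmul n (A s) (B s) i j) has_real_derivative
      madd (mmul n A' (B x)) (mmul n (A x) B') i j) (at x)"
    using ij by (simp add: mmul_def madd_def sum.distrib mult.commute)
qed

lemma mat_has_deriv_unique_near:
  assumes "mat_has_deriv n A A' x" "mat_has_deriv n B B' x"
    and "e > 0" "\<forall>s. \<bar>s - x\<bar> < e \<longrightarrow> A s = B s"
  shows "mtrunc n A' = mtrunc n B'"
proof (intro ext)
  fix i j
  show "mtrunc n A' i j = mtrunc n B' i j"
  proof (cases "i < n \<and> j < n")
    case True
    have near: "eventually (\<lambda>s. A s i j = B s i j) (nhds x)"
      unfolding eventually_nhds_metric using assms(3,4) by (auto simp: dist_real_def)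
    have "((\<lambda>s. A s i j) has_real_derivative A' i j) (at x)"
      using assms(1) True by (simp add: mat_has_deriv_def)
    then have "((\<lambda>s. B s i j) has_real_derivative A' i j) (at x)"
      using DERIV_cong_ev[OF refl near refl] by simp
    moreover have "((\<lambda>s. B s i j) has_real_derivative B' i j) (at x)"
      using assms(2) True by (simp add: mat_has_deriv_def)
    ultimately show ?thesis
      using True by (simp add: mtrunc_def DERIV_unique)
  qed (auto simp: mtrunc_def)
qed

lemma mat_has_deriv_entry:
  assumes "mat_has_deriv n A A' x" "\<And>s. in_mat n (A s)" "in_mat n A'"
  shows "((\<lambda>s. A s i j) has_real_derivative A' i j) (at x)"
  using assms by (cases "i < n \<and> j < n") (auto simp: mat_has_deriv_def in_mat_def)

lemma conjm_const_has_deriv: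
  assumes "mat_has_deriv n A A' x"
  shows "mat_has_deriv n (\<lambda>s. conjm n V (A s)) (conjm n V A') x"
proof -
  have "mat_has_deriv n (\<lambda>s. mmul n (mmul n V (A s)) (mtr V))
      (madd (mmul n (madd (mmul n (\<lambda>i j. 0) (A x)) (mmul n V A')) (mtr V))
            (mmul n (mmul n V (A x)) (\<lambda>i j. 0))) x"
    using assms by (intro mat_has_deriv_mmul mat_has_deriv_const)
  then show ?thesis
    by (simp add: conjm_def)
qed

lemma conjm_has_deriv:
  assumes "mat_has_deriv n Q Q' x"
  shows "mat_has_deriv n (\<lambda>s. conjm n (Q s) C)
    (madd (mmul n (mmul n Q' C) (mtr (Q x))) (mmul n (mmul n (Q x) C) (mtr Q'))) x"
proof -
  have "mat_has_deriv n (\<lambda>s. mmul n (mmul n (Q s) C) (mtr (Q s)))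
      (madd (mmul n (madd (mmul n Q' C) (mmul n (Q x) (\<lambda>i j. 0))) (mtr (Q x)))
            (mmul n (mmul n (Q x) C) (mtr Q'))) x"
    using assms by (intro mat_has_deriv_mmul mat_has_deriv_mtr mat_has_deriv_const)
  then show ?thesis
    by (simp add: conjm_def)
qed

lemma orth_curve_skew:
  assumes "\<forall>s. V s \<in> orth n" "mat_has_deriv n V V' x"
  shows "skew_mat n (mmul n (mtr (V x)) V')"
  unfolding skew_mat_def
proof (intro allI impI)
  fix i j assume ij: "i < n \<and> j < n"
  have "mat_has_deriv n (\<lambda>s. mmul n (mtr (V s)) (V s))
      (madd (mmul n (mtr V') (V x)) (mmul n (mtr (V x)) V')) x"
    using assms(2) by (intro mat_has_deriv_mmul mat_has_deriv_mtr)
  moreover have "mat_has_deriv n (\<lambda>s. idm n) (\<lambda>i j. 0) x"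
    by (rule mat_has_deriv_const)
  ultimately have "mtrunc n (madd (mmul n (mtr V') (V x)) (mmul n (mtr (V x)) V')) = mtrunc n (\<lambda>i j. 0)"
    using assms(1) by (intro mat_has_deriv_unique_near[where e = 1]) (auto simp: orth_def)
  then have "mtrunc n (madd (mmul n (mtr V') (V x)) (mmul n (mtr (V x)) V')) i j = mtrunc n (\<lambda>i j. 0) i j"
    by simp
  then have "madd (mmul n (mtr V') (V x)) (mmul n (mtr (V x)) V') i j = 0"
    using ij by (simp add: mtrunc_def)
  then show "mmul n (mtr (V x)) V' j i = - mmul n (mtr (V x)) V' i j"
    using ij by (simp add: madd_def mmul_def mtr_def mult.commute eq_neg_iff_add_eq_0)
qed

section \<open>The matrix exponential\<close>

primrec mpow :: "nat \<Rightarrow> mat \<Rightarrow> nat \<Rightarrow> mat" where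
  "mpow n W 0 = idm n"
| "mpow n W (Suc k) = mmul n W (mpow n W k)"

lemma mpow_bound: "\<bar>mpow n W k i j\<bar> \<le> (\<Sum>a<n. \<Sum>b<n. \<bar>W a b\<bar>) ^ k"
proof (induction k arbitrary: i j)
  case 0
  then show ?case by (simp add: idm_def)
next
  case (Suc k)
  let ?M = "\<Sum>a<n. \<Sum>b<n. \<bar>W a b\<bar>"
  show ?case
  proof (cases "i < n \<and> j < n")
    case True
    have "\<bar>mpow n W (Suc k) i j\<bar> \<le> (\<Sum>l<n. \<bar>W i l\<bar> * \<bar>mpow n W k l j\<bar>)"
      using True by (simp add: mmul_def abs_mult sum_abs[THEN order_trans])
    also have "\<dots> \<le> (\<Sum>l<n. \<bar>W i l\<bar>) * ?M ^ k"
      unfolding sum_distrib_right by (intro sum_mono mult_left_mono Suc.IH) auto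
    also have "\<dots> \<le> ?M * ?M ^ k"
      using True by (intro mult_right_mono member_le_sum zero_le_power sum_nonneg) auto
    finally show ?thesis
      by simp
  qed (auto simp: mmul_def intro!: mult_nonneg_nonneg zero_le_power sum_nonneg)
qed

definition mexp :: "nat \<Rightarrow> mat \<Rightarrow> real \<Rightarrow> mat" where
  "mexp n W s = (\<lambda>i j. \<Sum>k. mpow n W k i j / fact k * s ^ k)"

lemma mexp_summable: "summable (\<lambda>k. mpow n W k i j / fact k * s ^ k)"
proof (rule summable_comparison_test'[where N = 0])
  let ?M = "\<Sum>a<n. \<Sum>b<n. \<bar>W a b\<bar>"
  show "summable (\<lambda>k. inverse (fact k) * (?M * \<bar>s\<bar>) ^ k)"
    by (rule summable_exp)
  show "norm (mpow n W k i j / fact k * s ^ k) \<le> inverse (fact k) * (?M * \<bar>s\<bar>) ^ k" for k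
  proof -
    have "norm (mpow n W k i j / fact k * s ^ k) = inverse (fact k) * (\<bar>mpow n W k i j\<bar> * \<bar>s\<bar> ^ k)"
      by (simp add: abs_mult power_abs divide_inverse mult_ac)
    also have "\<dots> \<le> inverse (fact k) * (?M ^ k * \<bar>s\<bar> ^ k)"
      by (intro mult_left_mono mult_right_mono mpow_bound) auto
    finally show ?thesis
      by (simp add: power_mult_distrib)
  qed
qed

lemma mexp_has_deriv: "mat_has_deriv n (mexp n W) (mmul n W (mexp n W x)) x"
  unfolding mat_has_deriv_def
proof (intro allI impI)
  fix i j assume ij: "i < n \<and> j < n"
  let ?c = "\<lambda>k. mpow n W k i j / fact k"
  have diffs_term: "diffs ?c k * x ^ k = (\<Sum>l<n. W i l * (mpow n W k l j / fact k * x ^ k))" for k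
  proof -
    have "diffs ?c k = (\<Sum>l<n. W i l * mpow n W k l j) / fact k"
      using ij by (simp add: diffs_def fact_Suc mmul_def field_simps del: of_nat_Suc)
    then show ?thesis
      by (simp add: sum_distrib_right sum_divide_distrib mult.assoc)
  qed
  have "((\<lambda>s. \<Sum>k. ?c k * s ^ k) has_real_derivative (\<Sum>k. diffs ?c k * x ^ k)) (at x)"
    by (intro termdiffs_strong_converges_everywhere mexp_summable)
  moreover have "(\<Sum>k. diffs ?c k * x ^ k) = (\<Sum>l<n. \<Sum>k. W i l * (mpow n W k l j / fact k * x ^ k))"
    unfolding diffs_term by (intro suminf_sum summable_mult mexp_summable)
  moreover have "\<dots> = (\<Sum>l<n. W i l * mexp n W x l j)"
    unfolding mexp_def by (intro sum.cong refl suminf_mult mexp_summable)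
  moreover have "\<dots> = mmul n W (mexp n W x) i j"
    using ij by (simp add: mmul_def)
  ultimately show "((\<lambda>s. mexp n W s i j) has_real_derivative mmul n W (mexp n W x) i j) (at x)"
    by (simp add: mexp_def)
qed

lemma mexp_zero: "mexp n W 0 = idm n"
  by (intro ext) (simp only: mexp_def powser_zero, simp)

lemma in_mat_mexp: "in_mat n (mexp n W s)"
proof -
  have "mpow n W k i j = 0" if "n \<le> i \<or> n \<le> j" for k i j
    using that by (cases k) (auto simp: idm_def mmul_def)
  then show ?thesis
    by (simp add: in_mat_def mexp_def)
qed

lemma mexp_orth:
  assumes "skew_mat n W"
  shows "mexp n W s \<in> orth n"
proof -
  let ?Q = "mexp n W"
  have "mmul n (madd (mtr W) W) (?Q x) = mmul n (\<lambda>i j. 0) (?Q x)" for x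
    by (intro mmul_cong) (auto simp: madd_def mtr_def skew_mat_add[OF assms])
  moreover have "madd (mmul n (mtr (mmul n W (?Q x))) (?Q x)) (mmul n (mtr (?Q x)) (mmul n W (?Q x)))
      = mmul n (mtr (?Q x)) (mmul n (madd (mtr W) W) (?Q x))" for x
    by (simp add: mtr_mmul mmul_assoc mmul_madd_left mmul_madd_right)
  ultimately have "madd (mmul n (mtr (mmul n W (?Q x))) (?Q x)) (mmul n (mtr (?Q x)) (mmul n W (?Q x)))
      = (\<lambda>i j. 0)" for x
    by simp
  moreover have "mat_has_deriv n (\<lambda>s. mmul n (mtr (?Q s)) (?Q s))
      (madd (mmul n (mtr (mmul n W (?Q x))) (?Q x)) (mmul n (mtr (?Q x)) (mmul n W (?Q x)))) x" for x
    by (intro mat_has_deriv_mmul mat_has_deriv_mtr mexp_has_deriv)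
  ultimately have deriv0: "mat_has_deriv n (\<lambda>s. mmul n (mtr (?Q s)) (?Q s)) (\<lambda>i j. 0) x" for x
    by simp
  have "mmul n (mtr (?Q s)) (?Q s) i j = mmul n (mtr (?Q 0)) (?Q 0) i j" if "i < n" "j < n" for i j
    using deriv0 that unfolding mat_has_deriv_def
    by (intro DERIV_isconst_all[of "\<lambda>s. mmul n (mtr (?Q s)) (?Q s) i j"]) simp
  moreover have "mmul n (mtr (?Q 0)) (?Q 0) = idm n"
    by (simp add: mexp_zero)
  ultimately have "mmul n (mtr (?Q s)) (?Q s) = idm n"
    by (intro in_mat_eqI[of n] in_mat_mmul in_mat_idm) simp
  then show ?thesis
    by (simp add: orth_def in_mat_mexp)
qed

section \<open>Blocks and the matrices J_k\<close>

definition flag_dims :: "nat \<Rightarrow> (nat \<Rightarrow> nat) \<Rightarrow> nat \<Rightarrow> bool" where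
  "flag_dims n ns d \<longleftrightarrow>
     1 \<le> d \<and> 0 < ns 1 \<and> (\<forall>k. 1 \<le> k \<and> k < d \<longrightarrow> ns k < ns (Suc k)) \<and> ns d < n"

lemma bd_less_bd:
  assumes "flag_dims n ns d" "p < q" "q \<le> d + 1"
  shows "bd n ns d p < bd n ns d q"
  using assms(2,3)
proof (induction q)
  case 0
  then show ?case by simp
next
  case (Suc q)
  have "bd n ns d q < bd n ns d (Suc q)"
    using assms(1) Suc.prems by (cases "q = d") (auto simp: flag_dims_def bd_def)
  then show ?case
    using Suc by (cases "p = q") auto
qed

lemma bd_le_bd: "flag_dims n ns d \<Longrightarrow> p \<le> q \<Longrightarrow> q \<le> d + 1 \<Longrightarrow> bd n ns d p \<le> bd n ns d q"
  using bd_less_bd[of n ns d p q] by (cases "p = q") auto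

lemma blk_less_n:
  assumes "flag_dims n ns d" "i \<in> blk n ns d p"
  shows "i < n"
proof -
  have "bd n ns d p \<le> n"
    using bd_le_bd[OF assms(1), of p "d + 1"] by (cases "p \<le> d + 1") (auto simp: bd_def)
  then show ?thesis
    using assms(2) by (simp add: blk_def)
qed

lemma blk_unique:
  assumes "flag_dims n ns d" "1 \<le> p" "p \<le> d + 1" "1 \<le> q" "q \<le> d + 1"
    and "i \<in> blk n ns d p" "i \<in> blk n ns d q"
  shows "p = q"
proof (rule ccontr)
  assume "p \<noteq> q"
  then have "bd n ns d (min p q) \<le> bd n ns d (max p q - 1)"
    using assms by (intro bd_le_bd) auto
  then show False
    using assms(6,7) by (simp add: blk_def min_def max_def split: if_splits)
qed

lemma blk_last_iff: "flag_dims n ns d \<Longrightarrow> i \<in> blk n ns d (d + 1) \<longleftrightarrow> ns d \<le> i \<and> i < n"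
  by (auto simp: blk_def bd_def flag_dims_def)

lemma blk_less_ns:
  assumes "flag_dims n ns d" "1 \<le> k" "k \<le> d" "i \<in> blk n ns d k"
  shows "i < ns d"
  using bd_le_bd[OF assms(1), of k d] assms by (simp add: blk_def bd_def)

lemma blk_exists:
  assumes "flag_dims n ns d" "i < n"
  obtains p where "1 \<le> p" "p \<le> d + 1" "i \<in> blk n ns d p"
proof -
  define p where "p = (LEAST p. i < bd n ns d p)"
  have ex: "i < bd n ns d (d + 1)"
    using assms by (simp add: bd_def)
  then have ip: "i < bd n ns d p"
    unfolding p_def by (rule LeastI)
  have "p \<le> d + 1"
    unfolding p_def using ex by (rule Least_le)
  moreover have "p \<noteq> 0"
    using ip unfolding bd_def by (cases "p = 0") simp_all
  moreover have "\<not> i < bd n ns d (p - 1)"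
    using not_less_Least[of "p - 1" "\<lambda>p. i < bd n ns d p"] \<open>p \<noteq> 0\<close> by (simp add: p_def)
  ultimately show ?thesis
    using ip by (intro that[of p]) (auto simp: blk_def)
qed

definition jsgn :: "nat \<Rightarrow> (nat \<Rightarrow> nat) \<Rightarrow> nat \<Rightarrow> nat \<Rightarrow> nat \<Rightarrow> real" where
  "jsgn n ns d k i = (if i \<in> blk n ns d k then 1 else -1)"

lemma jsgn_blk:
  assumes "flag_dims n ns d" "1 \<le> p" "p \<le> d + 1" "i \<in> blk n ns d p" "1 \<le> k" "k \<le> d + 1"
  shows "jsgn n ns d k i = (if k = p then 1 else -1)"
proof -
  have "i \<in> blk n ns d k \<longleftrightarrow> k = p"
    using blk_unique[OF assms(1) assms(5,6,2,3) _ assms(4)] assms(4) by blast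
  then show ?thesis
    by (simp add: jsgn_def)
qed

lemma Jm_jsgn: "Jm n ns d k i j = (if i < n \<and> j < n \<and> i = j then jsgn n ns d k i else 0)"
  by (simp add: Jm_def jsgn_def)

lemma mmul_Jm_right:
  "mmul n A (Jm n ns d k) i j = (if i < n \<and> j < n then A i j * jsgn n ns d k j else 0)"
  by (simp add: mmul_def Jm_jsgn if_distrib if_distribR sum.delta' cong: if_cong)

lemma mmul_Jm_left:
  "mmul n (Jm n ns d k) A i j = (if i < n \<and> j < n then jsgn n ns d k i * A i j else 0)"
  by (simp add: mmul_def Jm_jsgn if_distrib if_distribR sum.delta cong: if_cong)

lemma Jm_commute: "mmul n (Jm n ns d k) (Jm n ns d l) = mmul n (Jm n ns d l) (Jm n ns d k)"
  by (intro ext) (simp add: mmul_Jm_left Jm_jsgn)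

lemma Jm_cube: "mmul n (mmul n (Jm n ns d k) (Jm n ns d k)) (Jm n ns d k) = Jm n ns d k"
  by (intro ext) (simp add: mmul_Jm_left mmul_Jm_right Jm_jsgn jsgn_def)

lemma flag_cube:
  assumes "G \<in> flag n ns d" "1 \<le> k" "k \<le> d"
  shows "mmul n (mmul n (G k) (G k)) (G k) = G k"
  using assms by (auto simp: flag_def conjt_def conjm_mmul_conjm Jm_cube)

lemma flag_commute:
  assumes "G \<in> flag n ns d" "1 \<le> k" "k \<le> d" "1 \<le> l" "l \<le> d"
  shows "mmul n (G k) (G l) = mmul n (G l) (G k)"
  using assms by (auto simp: flag_def conjt_def conjm_mmul_conjm Jm_commute[of n ns d k l])

section \<open>Tangent vectors of the flag manifold\<close>

lemma flag_tangent_curve: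
  assumes "D \<in> tangent_space (flag n ns d) c"
  obtains \<gamma> e where "e > 0" "\<forall>s. \<bar>s\<bar> < e \<longrightarrow> \<gamma> s \<in> flag n ns d" "\<gamma> 0 = c"
    "\<And>k. mat_has_deriv n (\<lambda>s. \<gamma> s k) (D k) 0"
  using assms unfolding tangent_space_def mat_has_deriv_def by auto

lemma flag_tangent_cube_constraint:
  assumes V0: "V0 \<in> orth n"
    and D: "D \<in> tangent_space (flag n ns d) (conjt n d V0 (Jm n ns d))"
    and k: "1 \<le> k" "k \<le> d" and ij: "i < n" "j < n"
  shows "(1 + jsgn n ns d k i * jsgn n ns d k j) * unconjm n V0 (D k) i j = 0"
proof -
  define E where "E = unconjm n V0 (D k)"
  let ?J = "Jm n ns d k"
  obtain \<gamma> e where e: "e > 0" and on_flag: "\<forall>s. \<bar>s\<bar> < e \<longrightarrow> \<gamma> s \<in> flag n ns d"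
    and \<gamma>0: "\<gamma> 0 = conjt n d V0 (Jm n ns d)" and d\<gamma>: "\<And>k. mat_has_deriv n (\<lambda>s. \<gamma> s k) (D k) 0"
    using flag_tangent_curve[OF D] by metis
  define G where "G = \<gamma> 0 k"
  have G: "G = conjm n V0 ?J"
    using \<gamma>0 k by (simp add: G_def conjt_def)
  have "mat_has_deriv n (\<lambda>s. mmul n (mmul n (\<gamma> s k) (\<gamma> s k)) (\<gamma> s k))
      (madd (mmul n (madd (mmul n (D k) G) (mmul n G (D k))) G) (mmul n (mmul n G G) (D k))) 0"
    unfolding G_def by (intro mat_has_deriv_mmul d\<gamma>)
  then have "mtrunc n (madd (mmul n (madd (mmul n (D k) G) (mmul n G (D k))) G) (mmul n (mmul n G G) (D k)))
      = mtrunc n (D k)"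
    using on_flag flag_cube k by (intro mat_has_deriv_unique_near[OF _ d\<gamma> e]) auto
  then have "mmul n (mtr V0) (mmul n (madd (mmul n (madd (mmul n (D k) G) (mmul n G (D k))) G)
      (mmul n (mmul n G G) (D k))) V0) = E"
    unfolding E_def unconjm_def by (metis mmul_mtrunc_left mmul_mtrunc_right)
  then have "madd (madd (mmul n (mmul n E ?J) ?J) (mmul n (mmul n ?J E) ?J)) (mmul n ?J (mmul n ?J E)) = E"
    using V0 by (simp add: G E_def unconjm_def conjm_def mmul_madd_left mmul_madd_right mmul_assoc
      orth_cancel orth_mtr_mmul)
  then have "madd (madd (mmul n (mmul n E ?J) ?J) (mmul n (mmul n ?J E) ?J)) (mmul n ?J (mmul n ?J E)) i j
      = E i j"
    by simp
  then show ?thesis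
    using ij by (simp add: madd_def mmul_Jm_left mmul_Jm_right) (simp add: E_def jsgn_def split: if_splits)
qed

lemma flag_tangent_commute_constraint:
  assumes V0: "V0 \<in> orth n"
    and D: "D \<in> tangent_space (flag n ns d) (conjt n d V0 (Jm n ns d))"
    and kl: "1 \<le> k" "k \<le> d" "1 \<le> l" "l \<le> d" and ij: "i < n" "j < n"
  shows "unconjm n V0 (D k) i j * jsgn n ns d l j + jsgn n ns d k i * unconjm n V0 (D l) i j
       = unconjm n V0 (D l) i j * jsgn n ns d k j + jsgn n ns d l i * unconjm n V0 (D k) i j"
proof -
  define E where "E = (\<lambda>k. unconjm n V0 (D k))"
  obtain \<gamma> e where e: "e > 0" and on_flag: "\<forall>s. \<bar>s\<bar> < e \<longrightarrow> \<gamma> s \<in> flag n ns d"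
    and \<gamma>0: "\<gamma> 0 = conjt n d V0 (Jm n ns d)" and d\<gamma>: "\<And>k. mat_has_deriv n (\<lambda>s. \<gamma> s k) (D k) 0"
    using flag_tangent_curve[OF D] by metis
  have G: "\<gamma> 0 r = conjm n V0 (Jm n ns d r)" if "1 \<le> r" "r \<le> d" for r
    using \<gamma>0 that by (simp add: conjt_def)
  have "mat_has_deriv n (\<lambda>s. mmul n (\<gamma> s k) (\<gamma> s l)) (madd (mmul n (D k) (\<gamma> 0 l)) (mmul n (\<gamma> 0 k) (D l))) 0"
    and "mat_has_deriv n (\<lambda>s. mmul n (\<gamma> s l) (\<gamma> s k)) (madd (mmul n (D l) (\<gamma> 0 k)) (mmul n (\<gamma> 0 l) (D k))) 0"
    by (intro mat_has_deriv_mmul d\<gamma>)+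
  then have "mtrunc n (madd (mmul n (D k) (\<gamma> 0 l)) (mmul n (\<gamma> 0 k) (D l)))
      = mtrunc n (madd (mmul n (D l) (\<gamma> 0 k)) (mmul n (\<gamma> 0 l) (D k)))"
    using on_flag flag_commute kl by (intro mat_has_deriv_unique_near[where e = e]) (auto simp: e)
  then have "mmul n (mtr V0) (mmul n (madd (mmul n (D k) (\<gamma> 0 l)) (mmul n (\<gamma> 0 k) (D l))) V0)
      = mmul n (mtr V0) (mmul n (madd (mmul n (D l) (\<gamma> 0 k)) (mmul n (\<gamma> 0 l) (D k))) V0)"
    by (metis mmul_mtrunc_left mmul_mtrunc_right)
  then have "madd (mmul n (E k) (Jm n ns d l)) (mmul n (Jm n ns d k) (E l))
      = madd (mmul n (E l) (Jm n ns d k)) (mmul n (Jm n ns d l) (E k))"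
    using V0 kl by (simp add: G E_def unconjm_def conjm_def mmul_madd_left mmul_madd_right mmul_assoc
      orth_cancel orth_mtr_mmul)
  then have "madd (mmul n (E k) (Jm n ns d l)) (mmul n (Jm n ns d k) (E l)) i j
      = madd (mmul n (E l) (Jm n ns d k)) (mmul n (Jm n ns d l) (E k)) i j"
    by simp
  then show ?thesis
    using ij by (simp add: E_def madd_def mmul_Jm_left mmul_Jm_right)
qed

lemma flag_tangent_block_zero:
  assumes dims: "flag_dims n ns d" and V0: "V0 \<in> orth n"
    and D: "D \<in> tangent_space (flag n ns d) (conjt n d V0 (Jm n ns d))"
    and p: "1 \<le> p" "p \<le> d + 1" "a \<in> blk n ns d p"
    and q: "1 \<le> q" "q \<le> d + 1" "b \<in> blk n ns d q"
    and k: "1 \<le> k" "k \<le> d" and off: "p = q \<or> k \<noteq> p \<and> k \<noteq> q"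
  shows "unconjm n V0 (D k) a b = 0"
proof -
  have "jsgn n ns d k a * jsgn n ns d k b = 1"
    using off k by (auto simp: jsgn_blk[OF dims p(1-3)] jsgn_blk[OF dims q(1-3)])
  then show ?thesis
    using flag_tangent_cube_constraint[OF V0 D k blk_less_n[OF dims p(3)] blk_less_n[OF dims q(3)]]
    by simp
qed

lemma flag_tangent_block_antisym:
  assumes dims: "flag_dims n ns d" and V0: "V0 \<in> orth n"
    and D: "D \<in> tangent_space (flag n ns d) (conjt n d V0 (Jm n ns d))"
    and p: "1 \<le> p" "p \<le> d" "a \<in> blk n ns d p"
    and q: "1 \<le> q" "q \<le> d" "b \<in> blk n ns d q" and "p \<noteq> q"
  shows "unconjm n V0 (D p) a b + unconjm n V0 (D q) a b = 0"
  using flag_tangent_commute_constraint[OF V0 D p(1,2) q(1,2) blk_less_n[OF dims p(3)] blk_less_n[OF dims q(3)]]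
    \<open>p \<noteq> q\<close> p q by (simp add: jsgn_blk[OF dims _ _ p(3)] jsgn_blk[OF dims _ _ q(3)])

lemma skew_commutator_flag_tangent:
  assumes V0: "V0 \<in> orth n" and skew: "skew_mat n \<Omega>"
    and X: "\<And>k. 1 \<le> k \<Longrightarrow> k \<le> d \<Longrightarrow>
      X k = madd (mmul n \<Omega> (Jm n ns d k)) (mmul n (Jm n ns d k) (mtr \<Omega>))"
  shows "conjt n d V0 X \<in> tangent_space (flag n ns d) (conjt n d V0 (Jm n ns d))"
proof -
  define \<gamma> where "\<gamma> = (\<lambda>s. conjt n d (mmul n V0 (mexp n \<Omega> s)) (Jm n ns d))"
  have "\<gamma> s \<in> flag n ns d" for s
    unfolding \<gamma>_def flag_def using orth_mmul[OF V0 mexp_orth[OF skew]] by blast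
  moreover have "\<gamma> 0 = conjt n d V0 (Jm n ns d)"
    using V0 by (simp add: \<gamma>_def mexp_zero mtrunc_in_mat orth_def)
  moreover have "((\<lambda>s. \<gamma> s k i j) has_real_derivative conjt n d V0 X k i j) (at 0)" for k i j
  proof (cases "1 \<le> k \<and> k \<le> d")
    case True
    let ?J = "Jm n ns d k"
    have "mat_has_deriv n (\<lambda>s. conjm n (mexp n \<Omega> s) ?J)
        (madd (mmul n (mmul n (mmul n \<Omega> (idm n)) ?J) (mtr (idm n)))
              (mmul n (mmul n (idm n) ?J) (mtr (mmul n \<Omega> (idm n))))) 0"
      using conjm_has_deriv[OF mexp_has_deriv[of n \<Omega> 0]] by (simp add: mexp_zero)
    then have "mat_has_deriv n (\<lambda>s. conjm n (mexp n \<Omega> s) ?J) (X k) 0"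
      using X True by simp
    then have "mat_has_deriv n (\<lambda>s. \<gamma> s k) (conjt n d V0 X k) 0"
      using True by (simp add: \<gamma>_def conjt_def conjm_mmul conjm_const_has_deriv)
    moreover have "in_mat n (\<gamma> s k)" "in_mat n (conjt n d V0 X k)" for s
      using True by (simp_all add: \<gamma>_def conjt_def conjm_def in_mat_mmul)
    ultimately show ?thesis
      by (rule mat_has_deriv_entry)
  next
    case False
    then show ?thesis
      by (auto simp: \<gamma>_def conjt_def)
  qed
  ultimately show ?thesis
    unfolding tangent_space_def by (intro CollectI exI[of _ \<gamma>] exI[of _ 1]) auto
qed

section \<open>The projection\<close>

definition mmul_upto :: "nat \<Rightarrow> mat \<Rightarrow> mat \<Rightarrow> mat" where
  "mmul_upto m A B = (\<lambda>i j. \<Sum>l<m. A i l * B l j)"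

definition flag_proj :: "nat \<Rightarrow> (nat \<Rightarrow> nat) \<Rightarrow> nat \<Rightarrow> mat \<Rightarrow> nat \<Rightarrow> mat" where
  "flag_proj n ns d L k = (\<lambda>i j.
     if i \<in> blk n ns d k \<and> j \<in> blk n ns d (d + 1) \<or> i \<in> blk n ns d (d + 1) \<and> j \<in> blk n ns d k
     then - mmul_upto (ns d) L L i j else 0)"

(* The commutator with J_k doubles the off-diagonal blocks, hence the factor 1/2. *)
definition proj_generator :: "nat \<Rightarrow> nat \<Rightarrow> mat \<Rightarrow> mat" where
  "proj_generator n m L = (\<lambda>i j.
     if i < m \<and> m \<le> j \<and> j < n then mmul_upto m L L i j / 2
     else if m \<le> i \<and> i < n \<and> j < m then - mmul_upto m L L i j / 2 else 0)"

lemma mmul_upto_skew_sym: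
  assumes "skew_mat n L" "m \<le> n" "i < n" "j < n"
  shows "mmul_upto m L L j i = mmul_upto m L L i j"
  unfolding mmul_upto_def
proof (intro sum.cong refl)
  fix l assume "l \<in> {..<m}"
  then have "l < n"
    using assms(2) by simp
  then have "L j l = - L l j" "L l i = - L i l"
    using skew_mat_swap[OF assms(1), of l j] skew_mat_swap[OF assms(1), of i l] assms(3,4) by simp_all
  then show "L j l * L l i = L i l * L l j"
    by simp
qed

lemma proj_generator_skew:
  assumes "skew_mat n L" "m \<le> n"
  shows "skew_mat n (proj_generator n m L)"
  unfolding skew_mat_def
proof (intro allI impI)
  fix i j assume ij: "i < n \<and> j < n"
  then have "mmul_upto m L L j i = mmul_upto m L L i j"
    using mmul_upto_skew_sym[OF assms] by blast
  then show "proj_generator n m L j i = - proj_generator n m L i j"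
    using ij by (auto simp: proj_generator_def)
qed

lemma flag_proj_in_mat: "flag_dims n ns d \<Longrightarrow> in_mat n (flag_proj n ns d L k)"
  by (auto simp: in_mat_def flag_proj_def dest: blk_less_n)

lemma flag_proj_sym:
  assumes dims: "flag_dims n ns d" and skew: "skew_mat n L"
  shows "flag_proj n ns d L k j i = flag_proj n ns d L k i j"
proof (cases "i < n \<and> j < n")
  case True
  moreover have "ns d \<le> n"
    using dims by (simp add: flag_dims_def)
  ultimately show ?thesis
    using mmul_upto_skew_sym[OF skew] by (auto simp: flag_proj_def)
next
  case False
  then show ?thesis
    using blk_less_n[OF dims] by (auto simp: flag_proj_def)
qed

lemma flag_proj_block_zero:
  assumes dims: "flag_dims n ns d" and k: "1 \<le> k" "k \<le> d"
    and p: "1 \<le> p" "p \<le> d + 1" "i \<in> blk n ns d p" and q: "1 \<le> q" "q \<le> d + 1" "j \<in> blk n ns d q"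
    and pq: "(p, q) \<noteq> (k, d + 1)" "(p, q) \<noteq> (d + 1, k)"
  shows "flag_proj n ns d L k i j = 0"
proof -
  have "i \<in> blk n ns d r \<longleftrightarrow> r = p" "j \<in> blk n ns d r \<longleftrightarrow> r = q" if "1 \<le> r" "r \<le> d + 1" for r
    using blk_unique[OF dims that p(1,2) _ p(3)] blk_unique[OF dims that q(1,2) _ q(3)] p(3) q(3) by blast+
  then show ?thesis
    using k pq by (auto simp: flag_proj_def)
qed

lemma flag_proj_eq_commutator:
  assumes dims: "flag_dims n ns d" and skew: "skew_mat n L" and k: "1 \<le> k" "k \<le> d"
  defines "\<Omega> \<equiv> proj_generator n (ns d) L"
  shows "flag_proj n ns d L k = madd (mmul n \<Omega> (Jm n ns d k)) (mmul n (Jm n ns d k) (mtr \<Omega>))"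
proof (rule in_mat_eqI[of n])
  show "in_mat n (flag_proj n ns d L k)"
    using dims by (rule flag_proj_in_mat)
  show "in_mat n (madd (mmul n \<Omega> (Jm n ns d k)) (mmul n (Jm n ns d k) (mtr \<Omega>)))"
    by (simp add: in_mat_def madd_def mmul_def)
  fix i j assume ij: "i < n" "j < n"
  have "\<Omega> j i = - \<Omega> i j"
    using skew_mat_swap[OF proj_generator_skew[OF skew] ij] dims by (simp add: \<Omega>_def flag_dims_def)
  then have "madd (mmul n \<Omega> (Jm n ns d k)) (mmul n (Jm n ns d k) (mtr \<Omega>)) i j
      = \<Omega> i j * jsgn n ns d k j - jsgn n ns d k i * \<Omega> i j"
    using ij by (simp add: madd_def mmul_Jm_left mmul_Jm_right mtr_def)
  then show "flag_proj n ns d L k i j = madd (mmul n \<Omega> (Jm n ns d k)) (mmul n (Jm n ns d k) (mtr \<Omega>)) i j"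
    using ij blk_less_ns[OF dims k, of i] blk_less_ns[OF dims k, of j] blk_last_iff[OF dims, of i]
      blk_last_iff[OF dims, of j]
    by (auto simp: flag_proj_def \<Omega>_def proj_generator_def jsgn_def)
qed

lemma flag_proj_tangent:
  assumes dims: "flag_dims n ns d" and V0: "V0 \<in> orth n" and skew: "skew_mat n L"
  shows "conjt n d V0 (flag_proj n ns d L) \<in> tangent_space (flag n ns d) (conjt n d V0 (Jm n ns d))"
proof (rule skew_commutator_flag_tangent[OF V0 proj_generator_skew[OF skew]])
  show "ns d \<le> n"
    using dims by (simp add: flag_dims_def)
qed (rule flag_proj_eq_commutator[OF dims skew])

lemma flag_proj_corner_block:
  "i \<in> blk n ns d k \<Longrightarrow> j \<in> blk n ns d (d + 1) \<Longrightarrow> flag_proj n ns d L k i j = - (\<Sum>l < ns d. L i l * L l j)"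
  by (simp add: flag_proj_def mmul_upto_def)

lemma sandwich_Jm_entry:
  assumes "a < n" "b < n"
    and "(\<forall>l \<in> blk n ns d k. L a l = 0) \<or> (\<forall>l \<in> blk n ns d k. L l b = 0)"
  shows "mmul n (mmul n L (Jm n ns d k)) L a b = - mmul n L L a b"
proof -
  have "mmul n (mmul n L (Jm n ns d k)) L a b = (\<Sum>l<n. L a l * jsgn n ns d k l * L l b)"
    using assms(1,2) by (simp add: mmul_def[of n "mmul n L (Jm n ns d k)"] mmul_Jm_right)
  also have "\<dots> = (\<Sum>l<n. - (L a l * L l b))"
    using assms(3) by (intro sum.cong refl) (auto simp: jsgn_def)
  finally show ?thesis
    using assms(1,2) by (simp add: mmul_def sum_negf)
qed

lemma mmul_upto_eq_mmul_entry:
  assumes dims: "flag_dims n ns d" and "a < n" "b < n"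
    and "(\<forall>l \<in> blk n ns d (d + 1). L a l = 0) \<or> (\<forall>l \<in> blk n ns d (d + 1). L l b = 0)"
  shows "mmul_upto (ns d) L L a b = mmul n L L a b"
proof -
  have "(\<Sum>l<ns d. L a l * L l b) = (\<Sum>l<n. L a l * L l b)"
    using assms blk_last_iff[OF dims] by (intro sum.mono_neutral_left) (auto simp: flag_dims_def)
  then show ?thesis
    using assms(2,3) by (simp add: mmul_upto_def mmul_def)
qed

lemma flag_tangent_sum_support:
  assumes dims: "flag_dims n ns d" and V0: "V0 \<in> orth n"
    and D: "D \<in> tangent_space (flag n ns d) (conjt n d V0 (Jm n ns d))"
    and p: "1 \<le> p" "p \<le> d + 1" "a \<in> blk n ns d p"
    and q: "1 \<le> q" "q \<le> d + 1" "b \<in> blk n ns d q"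
  shows "(\<Sum>k\<in>{1..d}. f k * unconjm n V0 (D k) a b)
       = (\<Sum>k\<in>{p, q} \<inter> {1..d}. f k * unconjm n V0 (D k) a b)"
proof (rule sum.mono_neutral_right)
  show "\<forall>k \<in> {1..d} - {p, q} \<inter> {1..d}. f k * unconjm n V0 (D k) a b = 0"
  proof
    fix k assume "k \<in> {1..d} - {p, q} \<inter> {1..d}"
    then have "unconjm n V0 (D k) a b = 0"
      by (intro flag_tangent_block_zero[OF dims V0 D p q]) auto
    then show "f k * unconjm n V0 (D k) a b = 0"
      by simp
  qed
qed auto

lemma flag_residual_entry_orth:
  assumes dims: "flag_dims n ns d" and V0: "V0 \<in> orth n"
    and D: "D \<in> tangent_space (flag n ns d) (conjt n d V0 (Jm n ns d))"
    and Ldiag: "\<And>p i j. 1 \<le> p \<Longrightarrow> p \<le> d + 1 \<Longrightarrow>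
      i \<in> blk n ns d p \<Longrightarrow> j \<in> blk n ns d p \<Longrightarrow> L i j = 0"
    and ab: "a < n" "b < n"
  shows "(\<Sum>k\<in>{1..d}. (mmul n (mmul n L (Jm n ns d k)) L a b - flag_proj n ns d L k a b)
            * unconjm n V0 (D k) a b) = 0" (is "?lhs = 0")
proof -
  let ?f = "\<lambda>k. mmul n (mmul n L (Jm n ns d k)) L a b - flag_proj n ns d L k a b"
  obtain p where p: "1 \<le> p" "p \<le> d + 1" "a \<in> blk n ns d p"
    using blk_exists[OF dims ab(1)] by blast
  obtain q where q: "1 \<le> q" "q \<le> d + 1" "b \<in> blk n ns d q"
    using blk_exists[OF dims ab(2)] by blast
  have Lp: "\<forall>l \<in> blk n ns d p. L a l = 0" and Lq: "\<forall>l \<in> blk n ns d q. L l b = 0"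
    using Ldiag[OF p] Ldiag[OF q(1,2) _ q(3)] by blast+
  note support = flag_tangent_sum_support[OF dims V0 D p q]
  consider "p = q" | "p \<noteq> q" "p \<le> d" "q \<le> d" | "p \<noteq> q" "q = d + 1" | "p \<noteq> q" "p = d + 1"
    using p q by linarith
  then show ?thesis
  proof cases
    case 1
    then show ?thesis
      using flag_tangent_block_zero[OF dims V0 D p q] by simp
  next
    case 2
    have "flag_proj n ns d L k a b = 0" for k
      using blk_less_ns[OF dims p(1) 2(2) p(3)] blk_less_ns[OF dims q(1) 2(3) q(3)] blk_last_iff[OF dims]
      by (simp add: flag_proj_def)
    moreover have "{p, q} \<inter> {1..d} = {p, q}"
      using 2 p q by auto
    ultimately have "?lhs = - mmul n L L a b * (unconjm n V0 (D p) a b + unconjm n V0 (D q) a b)"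
      using support[of ?f] 2 sandwich_Jm_entry[OF ab, of ns d p L] sandwich_Jm_entry[OF ab, of ns d q L] Lp Lq
      by (simp add: algebra_simps)
    then show ?thesis
      using flag_tangent_block_antisym[OF dims V0 D p(1) _ p(3) q(1) _ q(3)] 2 by simp
  next
    case 3
    then have "flag_proj n ns d L p a b = - mmul n L L a b"
      using mmul_upto_eq_mmul_entry[OF dims ab] Lq p q by (simp add: flag_proj_def)
    then show ?thesis
      using support[of ?f] 3 p sandwich_Jm_entry[OF ab, of ns d p L] Lp by simp
  next
    case 4
    then have "flag_proj n ns d L q a b = - mmul n L L a b"
      using mmul_upto_eq_mmul_entry[OF dims ab] Lp p q by (simp add: flag_proj_def)
    then show ?thesis
      using support[of ?f] 4 q sandwich_Jm_entry[OF ab, of ns d q L] Lq by simp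
  qed
qed

lemma flag_proj_residual_orth:
  assumes dims: "flag_dims n ns d" and V0: "V0 \<in> orth n"
    and D: "D \<in> tangent_space (flag n ns d) (conjt n d V0 (Jm n ns d))"
    and Ldiag: "\<And>p i j. 1 \<le> p \<Longrightarrow> p \<le> d + 1 \<Longrightarrow>
      i \<in> blk n ns d p \<Longrightarrow> j \<in> blk n ns d p \<Longrightarrow> L i j = 0"
  shows "finner n d (\<lambda>k i j. conjt n d V0 (\<lambda>k. mmul n (mmul n L (Jm n ns d k)) L) k i j
                              - conjt n d V0 (flag_proj n ns d L) k i j) D = 0"
proof -
  let ?Y = "\<lambda>k. mmul n (mmul n L (Jm n ns d k)) L" and ?P = "flag_proj n ns d L"
  let ?r = "\<lambda>k a b. (?Y k a b - ?P k a b) * unconjm n V0 (D k) a b"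
  have "finner n d (\<lambda>k i j. conjt n d V0 ?Y k i j - conjt n d V0 ?P k i j) D
      = (\<Sum>k\<in>{1..d}. frob n (conjm n V0 (?Y k)) (D k) - frob n (conjm n V0 (?P k)) (D k))"
    unfolding finner_def by (intro sum.cong refl) (simp add: conjt_def frob_def left_diff_distrib sum_subtractf)
  also have "\<dots> = (\<Sum>k\<in>{1..d}. \<Sum>a<n. \<Sum>b<n. ?r k a b)"
    by (intro sum.cong refl) (simp only: frob_conjm, simp add: frob_def left_diff_distrib sum_subtractf)
  also have "\<dots> = (\<Sum>a<n. \<Sum>k\<in>{1..d}. \<Sum>b<n. ?r k a b)"
    by (rule sum.swap)
  also have "\<dots> = (\<Sum>a<n. \<Sum>b<n. \<Sum>k\<in>{1..d}. ?r k a b)"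
    by (intro sum.cong refl sum.swap)
  also have "\<dots> = 0"
    using flag_residual_entry_orth[OF dims V0 D Ldiag] by simp
  finally show ?thesis .
qed

theorem lemma3p8:
  fixes n d :: nat and ns :: "nat \<Rightarrow> nat" and V Vd :: "real \<Rightarrow> mat" and t :: real
  assumes d1: "1 \<le> d"
    and n1pos: "0 < ns 1"
    and nsinc: "\<forall>k. 1 \<le> k \<and> k < d \<longrightarrow> ns k < ns (Suc k)"
    and ndn: "ns d < n"
    and Vorth: "\<forall>s. V s \<in> orth n"
    and Vderiv: "\<forall>s i j. i < n \<and> j < n \<longrightarrow> ((\<lambda>s. V s i j) has_real_derivative Vd s i j) (at s)"
    and Ldiag: "\<forall>s p i j. 1 \<le> p \<and> p \<le> d + 1 \<and> i \<in> blk n ns d p \<and> j \<in> blk n ns d p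
                  \<longrightarrow> mmul n (mtr (V s)) (Vd s) i j = 0"
  shows "let L = mmul n (mtr (V t)) (Vd t);
             c = conjt n d (V t) (Jm n ns d);
             T3 = conjt n d (V t) (\<lambda>k. mmul n (mmul n L (Jm n ns d k)) L)
         in \<exists>X :: nat \<Rightarrow> mat.
              (\<forall>k. 1 \<le> k \<and> k \<le> d \<longrightarrow>
                  in_mat n (X k) \<and> (\<forall>i j. X k i j = X k j i) \<and>
                  (\<forall>p q i j. 1 \<le> p \<and> p \<le> d + 1 \<and> 1 \<le> q \<and> q \<le> d + 1 \<and>
                     (p, q) \<noteq> (k, d + 1) \<and> (p, q) \<noteq> (d + 1, k) \<and>
                     i \<in> blk n ns d p \<and> j \<in> blk n ns d q \<longrightarrow> X k i j = 0)) \<and>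
              is_orth_proj n d (tangent_space (flag n ns d) c) T3 (conjt n d (V t) X) \<and>
              (\<forall>k i j. 1 \<le> k \<and> k \<le> d \<and> i \<in> blk n ns d k \<and> j \<in> blk n ns d (d + 1) \<longrightarrow>
                  X k i j = - (\<Sum>l < ns d. L i l * L l j))"
proof -
  have dims: "flag_dims n ns d"
    using d1 n1pos nsinc ndn by (simp add: flag_dims_def)
  define L where "L = mmul n (mtr (V t)) (Vd t)"
  have V: "V t \<in> orth n"
    using Vorth by blast
  have skew: "skew_mat n L"
    unfolding L_def using Vorth Vderiv by (intro orth_curve_skew) (auto simp: mat_has_deriv_def)
  have Ldiag_t: "L i j = 0" if "1 \<le> p" "p \<le> d + 1" "i \<in> blk n ns d p" "j \<in> blk n ns d p" for p i j
    using Ldiag that unfolding L_def by blast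
  show ?thesis
    unfolding Let_def L_def[symmetric] is_orth_proj_def
    using flag_proj_in_mat[OF dims] flag_proj_sym[OF dims skew] flag_proj_block_zero[OF dims]
      flag_proj_corner_block flag_proj_tangent[OF dims V skew] flag_proj_residual_orth[OF dims V _ Ldiag_t]
    by (intro exI[of _ "flag_proj n ns d L"] conjI allI impI ballI) auto
qed

end
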